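(* Let $f$ be a spherically symmetric solution of (RVM) (equivalently of the reduced system below) with total mass $M$, and let $m(t,r)$ be the enclosed mass, so that $0 \leq m(t,r) \leq M$. Let $r, \ell > 0$ and $w < 0$ be given, let $(\mathcal{R}(t), \mathcal{W}(t), \mathcal{L}(t))$ solve $$\dot{\mathcal{R}} = \frac{\mathcal{W}}{\sqrt{1+\mathcal{W}^2 + \mathcal{L}\mathcal{R}^{-2}}},\quad \dot{\mathcal{W}} = \frac{\mathcal{L}}{\mathcal{R}^3\sqrt{1+\mathcal{W}^2+\mathcal{L}\mathcal{R}^{-2}}} + \frac{m(t,\mathcal{R})}{\mathcal{R}^2},\quad \dot{\mathcal{L}} = 0$$ for all $t \geq 0$ with $\mathcal{R}(0)=r$, $\mathcal{W}(0)=w$, $\mathcal{L}(0)=\ell$ (so $\mathcal{L}(t) = \ell$), and define $$D = \ell + M r \sqrt{1 + w^2 + \ell r^{-2}}.$$ Then: 1. There exists a unique $T_0 > 0$ such that $\mathcal{W}(t) < 0$ for $t \in [0,T_0)$, $\mathcal{W}(T_0) = 0$, and $\mathcal{W}(t) > 0$ for $t \in (T_0,\infty)$. 2. $T_0$ satisfies $$r\left(1 - \sqrt{\frac{D}{r^2w^2 + D}}\right) \leq T_0 \leq \frac{-w r^3\sqrt{1+w^2+\ell r^{-2}}}{\ell}.$$ 3. With $\mathcal{R}_- = r\sqrt{\frac{\ell}{r^2w^2+\ell}}$ and $\mathcal{R}_+ = r\sqrt{\frac{D}{r^2w^2+D}}$, we have $\mathcal{R}_- \leq \mathcal{R}(T_0)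 \leq \mathcal{R}_+$. 4. For all $t \in [0,T_0]$, $\mathcal{W}(t)^2 + \ell\mathcal{R}(t)^{-2} \leq w^2 + \ell r^{-2}$. 5. For all $t \in [0,T_0]$, $$\mathcal{R}(t)^2 \leq \left(r - \frac{|w|}{\sqrt{1+w^2+\ell r^{-2}}}\,t\right)^2 + \frac{D}{r^2(1+w^2+\ell r^{-2})}\,t^2.$$
   Context: The relativistic Vlasov–Maxwell system (RVM) is $\partial_t f + \hat p\cdot\nabla_x f + (E+\hat p\wedge B)\cdot\nabla_p f = 0$, $\partial_t E = \nabla\wedge B - 4\pi j$, $\nabla\cdot E = 4\pi\rho$, $\partial_t B = -\nabla\wedge E$, $\nabla\cdot B = 0$, with $\hat p = p/\sqrt{1+|p|^2}$, $\rho = \int f\,dp$, $j = \int \hat p f\,dp$, and $f \ge 0$. For spherically symmetric solutions (invariant under simultaneous rotation of $x$ and $p$), use the variables $r = |x|$, $w = x\cdot p / r$ (radial momentum), $\ell = |x\times p|^2$ (squared angular momentum), writing $f = f(t,r,w,\ell)$. Then $B = 0$, $\rho(t,r) = \frac{\pi}{r^2}\int_0^\infty\int_{-\infty}^\infty f(t,r,w,\ell)\,dw\,d\ell$, the enclosed mass is $m(t,r) = 4\pi\int_0^r s^2\rho(t,s)\,ds$, $E(t,x) = \frac{m(t,r)}{r^2}\frac{x}{r}$, and $f$ satisfies $$\partial_t f + \frac{w}{\sqrt{1+w^2+\ell r^{-2}}}\partial_r f + \left(\frac{\ell}{r^3\sqrt{1+w^2+\ell r^{-2}}} + \frac{m(t,r)}{r^2}\right)\partial_w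 f = 0.$$ The total mass is $M = \iint_{\mathbb{R}^6} f(0,x,p)\,dp\,dx$, which is conserved, and $0 \le m(t,r) \le M$. *)

theory Defs
  imports "HOL-Analysis.Analysis"
begin

text \<open>Spherically symmetric distribution functions are written in the reduced
variables: f t r w l, with r = |x|, w = radial momentum, l = squared angular momentum.\<close>

definition rho :: "(real \<Rightarrow> real \<Rightarrow> real \<Rightarrow> real \<Rightarrow> real) \<Rightarrow> real \<Rightarrow> real \<Rightarrow> real" where
  "rho f t r = pi / r^2 * (LBINT l:{0<..}. (LBINT w. f t r w l))"

definition enclosed_mass :: "(real \<Rightarrow> real \<Rightarrow> real \<Rightarrow> real \<Rightarrow> real) \<Rightarrow> real \<Rightarrow> real \<Rightarrow> real" where
  "enclosed_mass f t r = 4 * pi * (LBINT s=0..r. s^2 * rho f t s)"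

definition total_mass :: "(real \<Rightarrow> real \<Rightarrow> real \<Rightarrow> real \<Rightarrow> real) \<Rightarrow> real" where
  "total_mass f = 4 * pi * (LBINT s=0..\<infinity>. s^2 * rho f 0 s)"

end

theory Submission
  imports Defs
begin

text \<open>Along the characteristic, \<open>W\<close> is strictly increasing because \<open>W' > 0\<close>, so it
vanishes at most once. As long as \<open>W \<le> 0\<close> the particle moves inward (\<open>R \<le> r\<close>) and
\<open>|p|\<^sup>2 = W\<^sup>2 + l/R\<^sup>2\<close> decreases, because the centrifugal terms cancel in its
derivative \<open>2Wm/R\<^sup>2\<close>; hence the energy \<open>\<gamma> = sqrt (1 + |p|\<^sup>2)\<close> stays below its initial
value \<open>\<gamma>\<^sub>0\<close>, and \<open>W' \<ge> l/(r\<^sup>3\<gamma>\<^sub>0)\<close> forces \<open>W\<close> to vanish before \<open>-w r\<^sup>3\<gamma>\<^sub>0/l\<close>.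
Since \<open>m \<le> M \<le> M\<gamma>\<^sub>0/\<gamma>\<close>, the modified energy \<open>|p|\<^sup>2 + 2M\<gamma>\<^sub>0/R\<close> increases in this phase;
it bounds \<open>(RW)\<^sup>2\<close> from below by a quadratic in \<open>R\<close>. At the turning time, where \<open>W = 0\<close>,
this is the upper bound on \<open>R(T\<^sub>0)\<close>; before it, it shows that wherever \<open>R\<^sup>2\<close> lies above
the quadratic polynomial in \<open>t\<close> bounding it in the statement, \<open>R\<^sup>2\<close> grows more slowly than
that polynomial, so it can never cross it.
The lower bound on \<open>R(T\<^sub>0)\<close> comes from the decrease of \<open>|p|\<^sup>2\<close>, and the lower bound on
\<open>T\<^sub>0\<close> from the speed bound \<open>|R'| < 1\<close>.\<close>

lemma DERIV_nonneg_imp_le_within: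
  fixes g g' :: "real \<Rightarrow> real"
  assumes "a \<le> b" and "{a..b} \<subseteq> S"
    and deriv: "\<And>t. a \<le> t \<Longrightarrow> t \<le> b \<Longrightarrow> (g has_real_derivative g' t) (at t within S)"
    and nonneg: "\<And>t. a < t \<Longrightarrow> t < b \<Longrightarrow> 0 \<le> g' t"
  shows "g a \<le> g b"
proof (cases "a = b")
  case False
  then have "a < b" using \<open>a \<le> b\<close> by simp
  have "(g has_derivative (\<lambda>h. g' t * h)) (at t within {a..b})" if "a \<le> t" "t \<le> b" for t
    using has_field_derivative_subset[OF deriv[OF that] \<open>{a..b} \<subseteq> S\<close>]
    by (simp add: has_field_derivative_def)
  from mvt_simple[OF \<open>a < b\<close> this] obtain x where "x \<in> {a<..<b}" "g b - g a = g' x * (b - a)"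
    by blast
  moreover have "0 \<le> g' x * (b - a)"
    using nonneg[of x] \<open>x \<in> {a<..<b}\<close> by simp
  ultimately show ?thesis by simp
qed simp

lemma DERIV_nonpos_imp_ge_within:
  fixes g g' :: "real \<Rightarrow> real"
  assumes "a \<le> b" and "{a..b} \<subseteq> S"
    and deriv: "\<And>t. a \<le> t \<Longrightarrow> t \<le> b \<Longrightarrow> (g has_real_derivative g' t) (at t within S)"
    and nonpos: "\<And>t. a < t \<Longrightarrow> t < b \<Longrightarrow> g' t \<le> 0"
  shows "g b \<le> g a"
  using DERIV_nonneg_imp_le_within[of a b S "\<lambda>t. - g t" "\<lambda>t. - g' t"] assms
  by (auto intro: DERIV_minus)

lemma DERIV_pos_imp_less_within:
  fixes g g' :: "real \<Rightarrow> real"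
  assumes "a < b" and "{a..b} \<subseteq> S"
    and deriv: "\<And>t. a \<le> t \<Longrightarrow> t \<le> b \<Longrightarrow> (g has_real_derivative g' t) (at t within S)"
    and pos: "\<And>t. a < t \<Longrightarrow> t < b \<Longrightarrow> 0 < g' t"
  shows "g a < g b"
proof -
  have "(g has_derivative (\<lambda>h. g' t * h)) (at t within {a..b})" if "a \<le> t" "t \<le> b" for t
    using has_field_derivative_subset[OF deriv[OF that] \<open>{a..b} \<subseteq> S\<close>]
    by (simp add: has_field_derivative_def)
  from mvt_simple[OF \<open>a < b\<close> this] obtain x where "x \<in> {a<..<b}" "g b - g a = g' x * (b - a)"
    by blast
  moreover have "0 < g' x * (b - a)"
    using pos[of x] \<open>x \<in> {a<..<b}\<close> by simp
  ultimately show ?thesis by simp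
qed

lemma DERIV_barrier_nonpos:
  fixes \<phi> \<phi>' :: "real \<Rightarrow> real"
  assumes "a \<le> b" and "{a..b} \<subseteq> S"
    and deriv: "\<And>t. a \<le> t \<Longrightarrow> t \<le> b \<Longrightarrow> (\<phi> has_real_derivative \<phi>' t) (at t within S)"
    and start: "\<phi> a \<le> 0"
    and barrier: "\<And>t. a < t \<Longrightarrow> t < b \<Longrightarrow> 0 < \<phi> t \<Longrightarrow> \<phi>' t \<le> 0"
  shows "\<phi> b \<le> 0"
proof (rule ccontr)
  assume "\<not> \<phi> b \<le> 0"
  define Z where "Z = {a..b} \<inter> \<phi> -` {..0}"
  have "continuous_on {a..b} \<phi>"
    using deriv has_field_derivative_subset[OF _ \<open>{a..b} \<subseteq> S\<close>]
    by (intro DERIV_continuous_on) auto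
  then have "closed Z"
    unfolding Z_def by (rule continuous_closed_preimage) auto
  moreover have "Z \<noteq> {}" "bdd_above Z"
    using start \<open>a \<le> b\<close> unfolding Z_def by (auto intro: bdd_aboveI[where M = b])
  ultimately have "Sup Z \<in> Z"
    by (rule closed_contains_Sup[rotated -1])
  define s where "s = Sup Z"
  have s: "a \<le> s" "s \<le> b" "\<phi> s \<le> 0"
    using \<open>Sup Z \<in> Z\<close> unfolding s_def Z_def by auto
  have above: "0 < \<phi> t" if "s < t" "t \<le> b" for t
  proof (rule ccontr)
    assume "\<not> 0 < \<phi> t"
    then have "t \<in> Z" using that s unfolding Z_def by auto
    then show False using cSup_upper[OF _ \<open>bdd_above Z\<close>] that unfolding s_def by fastforce
  qed
  have "(\<lambda>t. - \<phi> t) s \<le> (\<lambda>t. - \<phi> t) b"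
  proof (rule DERIV_nonneg_imp_le_within[where S = S and g = "\<lambda>t. - \<phi> t" and g' = "\<lambda>t. - \<phi>' t"])
    show "{s..b} \<subseteq> S" using s \<open>{a..b} \<subseteq> S\<close> by auto
    show "((\<lambda>t. - \<phi> t) has_real_derivative - \<phi>' t) (at t within S)" if "s \<le> t" "t \<le> b" for t
      using deriv[of t] that s by (auto intro: DERIV_minus)
    show "0 \<le> - \<phi>' t" if "s < t" "t < b" for t
      using barrier[of t] above[of t] that s by auto
  qed (use s in auto)
  with s \<open>\<not> \<phi> b \<le> 0\<close> show False by simp
qed

text \<open>\<open>m t\<close> stands for the enclosed mass \<open>m(t, R t)\<close> along the characteristic, and the
constant angular momentum \<open>L = l\<close> is already substituted.\<close>

locale radial_characteristic =
  fixes R W m :: "real \<Rightarrow> real" and l M r w :: real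
  assumes l_pos: "0 < l"
    and R_pos: "0 \<le> t \<Longrightarrow> 0 < R t"
    and m_nonneg: "0 \<le> t \<Longrightarrow> 0 \<le> m t"
    and m_le: "0 \<le> t \<Longrightarrow> m t \<le> M"
    and R_ode: "0 \<le> t \<Longrightarrow>
      (R has_real_derivative W t / sqrt (1 + (W t)^2 + l / (R t)^2)) (at t within {0..})"
    and W_ode: "0 \<le> t \<Longrightarrow>
      (W has_real_derivative l / ((R t)^3 * sqrt (1 + (W t)^2 + l / (R t)^2)) + m t / (R t)^2)
        (at t within {0..})"
    and R_0: "R 0 = r" and W_0: "W 0 = w" and w_neg: "w < 0"
begin

definition momentum_sq :: "real \<Rightarrow> real" where
  "momentum_sq t = (W t)^2 + l / (R t)^2"

definition energy :: "real \<Rightarrow> real" where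
  "energy t = sqrt (1 + momentum_sq t)"

definition D :: real where
  "D = l + M * r * energy 0"

lemma r_pos: "0 < r"
  using R_pos[of 0] R_0 by simp

lemma M_nonneg: "0 \<le> M"
  using m_nonneg[of 0] m_le[of 0] by simp

lemma momentum_sq_0: "momentum_sq 0 = w^2 + l / r^2"
  by (simp add: momentum_sq_def R_0 W_0)

lemma energy_0: "energy 0 = sqrt (1 + w^2 + l / r^2)"
  by (simp add: energy_def momentum_sq_0 add.assoc)

lemma energy_0_sq: "(energy 0)^2 = 1 + w^2 + l / r^2"
  unfolding energy_0 using l_pos by (simp add: add_nonneg_nonneg)

lemma energy_pos: "0 < energy t"
  using l_pos by (simp add: energy_def momentum_sq_def add_pos_nonneg)

lemma R_deriv: "0 \<le> t \<Longrightarrow> (R has_real_derivative W t / energy t) (at t within {0..})"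
  using R_ode by (simp add: energy_def momentum_sq_def add.assoc)

lemma W_deriv: "0 \<le> t \<Longrightarrow>
    (W has_real_derivative l / ((R t)^3 * energy t) + m t / (R t)^2) (at t within {0..})"
  using W_ode by (simp add: energy_def momentum_sq_def add.assoc)

lemma W_continuous_on: "continuous_on {0..} W"
  using W_deriv by (rule DERIV_continuous_on) simp

lemma W_strict_mono:
  assumes "0 \<le> s" "s < t"
  shows "W s < W t"
proof (rule DERIV_pos_imp_less_within[OF \<open>s < t\<close>, where S = "{0..}"])
  show "{s..t} \<subseteq> {0..}" using assms by auto
  show "(W has_real_derivative l / ((R u)^3 * energy u) + m u / (R u)^2) (at u within {0..})"
    if "s \<le> u" for u
    using W_deriv that assms by simp
  show "0 < l / ((R u)^3 * energy u) + m u / (R u)^2" if "s < u" for u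
    using R_pos[of u] energy_pos[of u] l_pos m_nonneg[of u] that assms
    by (intro add_pos_nonneg) auto
qed

lemma W_mono: "0 \<le> s \<Longrightarrow> s \<le> t \<Longrightarrow> W s \<le> W t"
  using W_strict_mono[of s t] by (cases "s = t") auto

lemma momentum_sq_deriv:
  assumes "0 \<le> t"
  shows "(momentum_sq has_real_derivative 2 * W t * m t / (R t)^2) (at t within {0..})"
proof -
  have "R t \<noteq> 0" using R_pos[OF assms] by simp
  have "(momentum_sq has_real_derivative
      2 * W t * (l / ((R t)^3 * energy t) + m t / (R t)^2) - l * (2 * R t * (W t / energy t)) / ((R t)^2)^2)
      (at t within {0..})"
    unfolding momentum_sq_def[abs_def]
    by (rule derivative_eq_intros W_deriv[OF assms] R_deriv[OF assms] refl | simp add: \<open>R t \<noteq> 0\<close>)+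
  also have "2 * W t * (l / ((R t)^3 * energy t) + m t / (R t)^2) - l * (2 * R t * (W t / energy t)) / ((R t)^2)^2
      = 2 * W t * m t / (R t)^2"
    using \<open>R t \<noteq> 0\<close> energy_pos[of t] by (simp add: field_simps power2_eq_square power3_eq_cube)
  finally show ?thesis .
qed

lemma momentum_sq_le_initial:
  assumes "0 \<le> t" "W t \<le> 0"
  shows "momentum_sq t \<le> momentum_sq 0"
proof (rule DERIV_nonpos_imp_ge_within[of 0 t "{0..}" momentum_sq])
  show "(momentum_sq has_real_derivative 2 * W s * m s / (R s)^2) (at s within {0..})"
    if "0 \<le> s" for s
    using momentum_sq_deriv that by simp
  show "2 * W s * m s / (R s)^2 \<le> 0" if "0 < s" "s < t" for s
    using W_mono[of s t] m_nonneg[of s] that assms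
    by (simp add: mult_nonpos_nonneg divide_nonpos_nonneg)
qed (use assms in auto)

lemma energy_le_initial: "0 \<le> t \<Longrightarrow> W t \<le> 0 \<Longrightarrow> energy t \<le> energy 0"
  unfolding energy_def by (simp add: momentum_sq_le_initial)

lemma R_le_initial:
  assumes "0 \<le> t" "W t \<le> 0"
  shows "R t \<le> r"
proof -
  have "R t \<le> R 0"
  proof (rule DERIV_nonpos_imp_ge_within[of 0 t "{0..}" R])
    show "(R has_real_derivative W s / energy s) (at s within {0..})" if "0 \<le> s" for s
      using R_deriv that by simp
    show "W s / energy s \<le> 0" if "0 < s" "s < t" for s
      using W_mono[of s t] energy_pos[of s] that assms by (simp add: divide_nonpos_pos)
  qed (use assms in auto)
  then show ?thesis using R_0 by simp
qed

lemma R_ge_initial_minus_time: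
  assumes "0 \<le> t"
  shows "r - t \<le> R t"
proof -
  have "(\<lambda>s. R s + s) 0 \<le> (\<lambda>s. R s + s) t"
  proof (rule DERIV_nonneg_imp_le_within[of 0 t "{0..}" "\<lambda>s. R s + s"])
    show "((\<lambda>s. R s + s) has_real_derivative W s / energy s + 1) (at s within {0..})"
      if "0 \<le> s" for s
      using R_deriv[of s] that by (auto intro!: derivative_eq_intros)
    show "0 \<le> W s / energy s + 1" for s
    proof -
      have "\<bar>W s\<bar> \<le> energy s"
        using l_pos real_sqrt_le_mono[of "(W s)^2" "1 + momentum_sq s"]
        by (simp add: energy_def momentum_sq_def)
      then show ?thesis using energy_pos[of s] by (simp add: field_simps)
    qed
  qed (use assms in auto)
  then show ?thesis using R_0 by simp
qed

definition modified_energy :: "real \<Rightarrow> real" where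
  "modified_energy t = momentum_sq t + 2 * M * energy 0 / R t"

lemma modified_energy_deriv:
  assumes "0 \<le> t"
  shows "(modified_energy has_real_derivative
      2 * W t * (m t - M * energy 0 / energy t) / (R t)^2) (at t within {0..})"
proof -
  have "R t \<noteq> 0" using R_pos[OF assms] by simp
  have "(modified_energy has_real_derivative
      2 * W t * m t / (R t)^2 - 2 * M * energy 0 * (W t / energy t) / (R t * R t)) (at t within {0..})"
    unfolding modified_energy_def[abs_def]
    by (rule derivative_eq_intros momentum_sq_deriv[OF assms] R_deriv[OF assms] refl
        | simp add: \<open>R t \<noteq> 0\<close>)+
  also have "2 * W t * m t / (R t)^2 - 2 * M * energy 0 * (W t / energy t) / (R t * R t)
      = 2 * W t * (m t - M * energy 0 / energy t) / (R t)^2"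
    using energy_pos[of t] \<open>R t \<noteq> 0\<close> by (simp add: field_simps power2_eq_square)
  finally show ?thesis .
qed

lemma modified_energy_ge_initial:
  assumes "0 \<le> t" "W t \<le> 0"
  shows "modified_energy 0 \<le> modified_energy t"
proof (rule DERIV_nonneg_imp_le_within[of 0 t "{0..}" modified_energy])
  show "(modified_energy has_real_derivative
      2 * W s * (m s - M * energy 0 / energy s) / (R s)^2) (at s within {0..})" if "0 \<le> s" for s
    using modified_energy_deriv that by simp
  show "0 \<le> 2 * W s * (m s - M * energy 0 / energy s) / (R s)^2" if "0 < s" "s < t" for s
  proof -
    have "W s \<le> 0" using W_mono[of s t] that assms by simp
    have "M \<le> M * energy 0 / energy s"
      using M_nonneg energy_le_initial[OF _ \<open>W s \<le> 0\<close>] energy_pos[of s] that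
      by (simp add: field_simps mult_left_mono)
    then have "m s - M * energy 0 / energy s \<le> 0" using m_le[of s] that by simp
    with \<open>W s \<le> 0\<close> show ?thesis by (simp add: mult_nonpos_nonpos)
  qed
qed (use assms in auto)

lemma D_pos: "0 < D"
  unfolding D_def using l_pos M_nonneg r_pos energy_pos[of 0] by (simp add: add_pos_nonneg)

lemma radial_momentum_lower_bound:
  assumes "0 \<le> t" "W t \<le> 0"
  shows "(w^2 + D / r^2) * (R t)^2 - D \<le> (R t * W t)^2"
proof -
  define \<gamma> where "\<gamma> = energy 0"
  have "0 < R t" using R_pos assms by simp
  have "w^2 + l / r^2 + 2 * M * \<gamma> / r \<le> (W t)^2 + l / (R t)^2 + 2 * M * \<gamma> / R t"
    using modified_energy_ge_initial[OF assms]
    by (simp add: modified_energy_def momentum_sq_def R_0 W_0 \<gamma>_def)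
  then have "(R t)^2 * (w^2 + l / r^2 + 2 * M * \<gamma> / r)
      \<le> (R t)^2 * ((W t)^2 + l / (R t)^2 + 2 * M * \<gamma> / R t)"
    by (rule mult_left_mono) simp
  also have "\<dots> = (R t * W t)^2 + l + 2 * M * \<gamma> * R t"
    using \<open>0 < R t\<close> by (simp add: field_simps power2_eq_square)
  finally have "(R t)^2 * (w^2 + l / r^2 + 2 * M * \<gamma> / r) - l - 2 * M * \<gamma> * R t \<le> (R t * W t)^2"
    by simp
  moreover have "(w^2 + D / r^2) * (R t)^2 - D
      = (R t)^2 * (w^2 + l / r^2 + 2 * M * \<gamma> / r) - l - 2 * M * \<gamma> * R t - M * \<gamma> * (R t - r)^2 / r"
    using r_pos by (simp add: D_def \<gamma>_def field_simps power2_eq_square)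
  moreover have "0 \<le> M * \<gamma> * (R t - r)^2 / r"
    using M_nonneg energy_pos[of 0] r_pos by (simp add: \<gamma>_def)
  ultimately show ?thesis by linarith
qed

lemma W_nonneg_at_turning_time_bound: "0 \<le> W (- w * r^3 * energy 0 / l)"
proof (rule ccontr)
  define T where "T = - w * r^3 * energy 0 / l"
  define k where "k = l / (r^3 * energy 0)"
  assume "\<not> 0 \<le> W T"
  have "0 \<le> T"
    unfolding T_def using w_neg r_pos energy_pos[of 0] l_pos
    by (intro divide_nonneg_pos mult_nonneg_nonneg) auto
  have "(\<lambda>s. W s - k * s) 0 \<le> (\<lambda>s. W s - k * s) T"
  proof (rule DERIV_nonneg_imp_le_within[of 0 T "{0..}" "\<lambda>s. W s - k * s"])
    show "((\<lambda>s. W s - k * s) has_real_derivative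
        l / ((R s)^3 * energy s) + m s / (R s)^2 - k) (at s within {0..})" if "0 \<le> s" for s
      using W_deriv[OF that] by (auto intro!: derivative_eq_intros)
    show "0 \<le> l / ((R s)^3 * energy s) + m s / (R s)^2 - k" if "0 < s" "s < T" for s
    proof -
      have "W s \<le> 0" using W_mono[of s T] \<open>\<not> 0 \<le> W T\<close> that by simp
      have "(R s)^3 * energy s \<le> r^3 * energy 0"
        using R_le_initial[OF _ \<open>W s \<le> 0\<close>] energy_le_initial[OF _ \<open>W s \<le> 0\<close>]
          R_pos[of s] energy_pos[of s] that
        by (intro mult_mono power_mono) auto
      then have "k \<le> l / ((R s)^3 * energy s)"
        unfolding k_def using l_pos R_pos[of s] energy_pos[of s] r_pos energy_pos[of 0] that
        by (intro divide_left_mono mult_pos_pos) auto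
      moreover have "0 \<le> m s / (R s)^2" using m_nonneg[of s] that by simp
      ultimately show ?thesis by simp
    qed
  qed (use \<open>0 \<le> T\<close> in auto)
  moreover have "k * T = - w"
    unfolding k_def T_def using l_pos r_pos energy_pos[of 0] by (simp add: field_simps)
  ultimately show False using W_0 \<open>\<not> 0 \<le> W T\<close> by (simp add: T_def)
qed

lemma turning_time_exists: "\<exists>T. 0 < T \<and> T \<le> - w * r^3 * energy 0 / l \<and> W T = 0"
proof -
  define T where "T = - w * r^3 * energy 0 / l"
  have "0 \<le> T"
    unfolding T_def using w_neg r_pos energy_pos[of 0] l_pos
    by (intro divide_nonneg_pos mult_nonneg_nonneg) auto
  then obtain T0 where "0 \<le> T0" "T0 \<le> T" "W T0 = 0"
    using IVT'[of W 0 0 T] W_0 w_neg W_nonneg_at_turning_time_bound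
      continuous_on_subset[OF W_continuous_on, of "{0..T}"]
    by (auto simp: T_def)
  moreover have "T0 \<noteq> 0" using \<open>W T0 = 0\<close> W_0 w_neg by auto
  ultimately show ?thesis unfolding T_def by (intro exI[of _ T0]) auto
qed

lemma turning_radius_lower:
  assumes "0 \<le> T" "W T = 0"
  shows "r * sqrt (l / (r^2 * w^2 + l)) \<le> R T"
proof -
  have "0 < R T" using R_pos assms by simp
  have "0 < r^2 * w^2 + l" using l_pos by (simp add: add_nonneg_pos)
  have "l / (R T)^2 \<le> w^2 + l / r^2"
    using momentum_sq_le_initial[of T] assms by (simp add: momentum_sq_def R_0 W_0)
  then have "r^2 * l \<le> (R T)^2 * (r^2 * w^2 + l)"
    using \<open>0 < R T\<close> r_pos by (simp add: field_simps)
  moreover define q where "q = l / (r^2 * w^2 + l)"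
  ultimately have "r^2 * q \<le> (R T)^2"
    using \<open>0 < r^2 * w^2 + l\<close> by (simp add: pos_divide_le_eq mult.commute)
  then have "sqrt (r^2 * q) \<le> R T"
    using \<open>0 < R T\<close> real_sqrt_le_mono by fastforce
  moreover have "r * sqrt q = sqrt (r^2 * q)"
    using r_pos by (simp add: real_sqrt_mult)
  ultimately show ?thesis unfolding q_def[symmetric] by simp
qed

lemma turning_radius_upper:
  assumes "0 \<le> T" "W T = 0"
  shows "R T \<le> r * sqrt (D / (r^2 * w^2 + D))"
proof -
  have "0 < r^2 * w^2 + D" using D_pos by (simp add: add_nonneg_pos)
  have "(w^2 + D / r^2) * (R T)^2 \<le> D"
    using radial_momentum_lower_bound[of T] assms by simp
  then have "(R T)^2 * (r^2 * w^2 + D) \<le> r^2 * D"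
    using r_pos by (simp add: field_simps)
  moreover define q where "q = D / (r^2 * w^2 + D)"
  ultimately have "(R T)^2 \<le> r^2 * q"
    using \<open>0 < r^2 * w^2 + D\<close> by (simp add: pos_le_divide_eq)
  then have "R T \<le> sqrt (r^2 * q)"
    by (rule real_le_rsqrt)
  moreover have "r * sqrt q = sqrt (r^2 * q)"
    using r_pos by (simp add: real_sqrt_mult)
  ultimately show ?thesis unfolding q_def[symmetric] by simp
qed

lemma half_deriv_R_sq_le_comparison:
  assumes "0 \<le> s" "W s \<le> 0"
  defines "a \<equiv> \<bar>w\<bar> / energy 0" and "b \<equiv> D / (r^2 * (energy 0)^2)"
  assumes above: "(r - a * s)^2 + b * s^2 \<le> (R s)^2"
  shows "R s * (W s / energy s) \<le> b * s - a * (r - a * s)"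
proof -
  define x where "x = R s * (W s / energy s)"
  define y where "y = b * s - a * (r - a * s)"
  define q where "q = (energy 0)^2"
  define c where "c = (w^2 + D / r^2) / q"
  have "0 < q" unfolding q_def using energy_pos[of 0] by simp
  have "0 \<le> c" unfolding c_def using \<open>0 < q\<close> D_pos by simp
  have "x \<le> 0"
    unfolding x_def using R_pos[of s] energy_pos[of s] assms
    by (simp add: mult_nonneg_nonpos divide_nonpos_pos)
  have "a^2 + b = c" "b * r^2 = D / q"
    unfolding a_def b_def c_def q_def using r_pos energy_pos[of 0]
    by (simp_all add: field_simps power2_abs)
  moreover have "y^2 = (a^2 + b) * ((r - a * s)^2 + b * s^2) - b * r^2"
    unfolding y_def by (simp add: algebra_simps power2_eq_square)
  ultimately have "y^2 = c * ((r - a * s)^2 + b * s^2) - D / q"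
    by simp
  also have "c * ((r - a * s)^2 + b * s^2) - D / q \<le> c * (R s)^2 - D / q"
    using above \<open>0 \<le> c\<close> by (simp add: mult_left_mono)
  also have "\<dots> = ((w^2 + D / r^2) * (R s)^2 - D) / q"
    unfolding c_def by (simp add: diff_divide_distrib)
  also have "\<dots> \<le> (R s * W s)^2 / q"
    using radial_momentum_lower_bound[OF assms(1,2)] \<open>0 < q\<close> by (simp add: divide_right_mono)
  also have "\<dots> \<le> (R s * W s)^2 / (energy s)^2"
    unfolding q_def using energy_le_initial[OF assms(1,2)] energy_pos[of s]
    by (intro divide_left_mono power_mono mult_pos_pos) auto
  also have "\<dots> = x^2"
    unfolding x_def by (simp add: power_mult_distrib power_divide)
  finally have "\<bar>y\<bar> \<le> \<bar>x\<bar>" by (simp add: abs_le_square_iff)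
  with \<open>x \<le> 0\<close> show ?thesis unfolding x_def[symmetric] y_def[symmetric] by linarith
qed

lemma R_sq_le_comparison:
  assumes "0 \<le> t" "W t \<le> 0"
  defines "a \<equiv> \<bar>w\<bar> / energy 0" and "b \<equiv> D / (r^2 * (energy 0)^2)"
  shows "(R t)^2 \<le> (r - a * t)^2 + b * t^2"
proof -
  define A where "A s = (r - a * s)^2 + b * s^2" for s
  have "(\<lambda>s. (R s)^2 - A s) t \<le> 0"
  proof (rule DERIV_barrier_nonpos[of 0 t "{0..}" "\<lambda>s. (R s)^2 - A s"])
    show "((\<lambda>s. (R s)^2 - A s) has_real_derivative
        2 * (R s * (W s / energy s)) - 2 * (b * s - a * (r - a * s))) (at s within {0..})"
      if "0 \<le> s" for s
      unfolding A_def using R_deriv[OF that]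
      by (auto intro!: derivative_eq_intros simp: algebra_simps)
    show "2 * (R s * (W s / energy s)) - 2 * (b * s - a * (r - a * s)) \<le> 0"
      if "0 < s" "s < t" "0 < (R s)^2 - A s" for s
      using half_deriv_R_sq_le_comparison[of s] W_mono[of s t] that assms
      unfolding A_def a_def b_def by simp
  qed (use assms R_0 A_def in auto)
  then show ?thesis unfolding A_def by simp
qed

end

theorem lemma1:
  fixes f :: "real \<Rightarrow> real \<Rightarrow> real \<Rightarrow> real \<Rightarrow> real"
    and R W L :: "real \<Rightarrow> real" and r w l :: real
  assumes f_nonneg: "\<And>t r w l. f t r w l \<ge> 0"
    and m_bounds: "\<And>t s. t \<ge> 0 \<Longrightarrow> s > 0 \<Longrightarrow>
                     0 \<le> enclosed_mass f t s \<and> enclosed_mass f t s \<le> total_mass f"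
    and r_pos: "r > 0" and l_pos: "l > 0" and w_neg: "w < 0"
    and R_pos: "\<And>t. t \<ge> 0 \<Longrightarrow> R t > 0"
    and R_ode: "\<And>t. t \<ge> 0 \<Longrightarrow>
       (R has_real_derivative (W t / sqrt (1 + (W t)^2 + L t / (R t)^2))) (at t within {0..})"
    and W_ode: "\<And>t. t \<ge> 0 \<Longrightarrow>
       (W has_real_derivative (L t / ((R t)^3 * sqrt (1 + (W t)^2 + L t / (R t)^2))
                               + enclosed_mass f t (R t) / (R t)^2)) (at t within {0..})"
    and L_ode: "\<And>t. t \<ge> 0 \<Longrightarrow> (L has_real_derivative 0) (at t within {0..})"
    and init: "R 0 = r" "W 0 = w" "L 0 = l"
  shows "let M = total_mass f;
             D = l + M * r * sqrt (1 + w^2 + l / r^2);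
             P = (\<lambda>T0. T0 > 0 \<and> (\<forall>t\<in>{0..<T0}. W t < 0) \<and> W T0 = 0 \<and> (\<forall>t>T0. W t > 0))
         in (\<exists>T0. P T0 \<and> (\<forall>T. P T \<longrightarrow> T = T0)
               \<and> r * (1 - sqrt (D / (r^2 * w^2 + D))) \<le> T0
               \<and> T0 \<le> - w * r^3 * sqrt (1 + w^2 + l / r^2) / l
               \<and> r * sqrt (l / (r^2 * w^2 + l)) \<le> R T0
               \<and> R T0 \<le> r * sqrt (D / (r^2 * w^2 + D))
               \<and> (\<forall>t\<in>{0..T0}. (W t)^2 + l / (R t)^2 \<le> w^2 + l / r^2)
               \<and> (\<forall>t\<in>{0..T0}. (R t)^2 \<le>
                    (r - \<bar>w\<bar> / sqrt (1 + w^2 + l / r^2) * t)^2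
                    + D / (r^2 * (1 + w^2 + l / r^2)) * t^2))"
proof -
  have L_const: "L t = l" if "0 \<le> t" for t
  proof -
    obtain c where "\<forall>s\<in>{0..}. L s = c"
      using has_field_derivative_zero_constant[of "{0::real..}" L] L_ode by auto
    with that init(3) show ?thesis by force
  qed
  interpret radial_characteristic R W "\<lambda>t. enclosed_mass f t (R t)" l "total_mass f" r w
    using l_pos R_pos m_bounds R_ode W_ode L_const init w_neg by unfold_locales auto
  obtain T0 where T0: "0 < T0" "T0 \<le> - w * r^3 * energy 0 / l" "W T0 = 0"
    using turning_time_exists by blast
  have incoming: "W t \<le> 0" if "t \<in> {0..T0}" for t
    using W_mono[of t T0] that T0 by auto
  show ?thesis
    unfolding Let_def energy_0[symmetric] D_def[symmetric]
  proof (intro exI[of _ T0] conjI allI impI ballI)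
    show "T0 > 0" "W T0 = 0" "T0 \<le> - w * r^3 * energy 0 / l" by (fact T0)+
    show "W t < 0" if "t \<in> {0..<T0}" for t
      using W_strict_mono[of t T0] that T0 by auto
    show "W t > 0" if "t > T0" for t
      using W_strict_mono[of T0 t] that T0 by auto
    show "T = T0" if "0 < T \<and> (\<forall>t\<in>{0..<T}. W t < 0) \<and> W T = 0 \<and> (\<forall>t>T. 0 < W t)" for T
      using W_strict_mono[of T T0] W_strict_mono[of T0 T] that T0 by (cases T T0 rule: linorder_cases) auto
    show "r * (1 - sqrt (D / (r^2 * w^2 + D))) \<le> T0"
      using R_ge_initial_minus_time[of T0] turning_radius_upper[of T0] T0 by (simp add: algebra_simps)
    show "r * sqrt (l / (r^2 * w^2 + l)) \<le> R T0" "R T0 \<le> r * sqrt (D / (r^2 * w^2 + D))"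
      using turning_radius_lower[of T0] turning_radius_upper[of T0] T0 by simp_all
    show "(W t)^2 + l / (R t)^2 \<le> w^2 + l / r^2" if "t \<in> {0..T0}" for t
      using momentum_sq_le_initial[of t] incoming[OF that] that
      by (simp add: momentum_sq_def momentum_sq_0[symmetric])
    show "(R t)^2 \<le> (r - \<bar>w\<bar> / energy 0 * t)^2 + D / (r^2 * (1 + w^2 + l / r^2)) * t^2"
      if "t \<in> {0..T0}" for t
      using R_sq_le_comparison[of t] incoming[OF that] that by (simp add: energy_0_sq)
  qed
qed

end
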